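(* Let $n,N\ge 1$ and let $r_1,\dots,r_N,r$ be positive integers with $r_i\le r\le\lfloor (n-1)/2\rfloor$. Let $f:\mathbb{R}^{Nn}\to\mathbb{R}$ be nonnegative, level-bounded and continuously differentiable with Lipschitz continuous gradient. Let $(k,\mathcal{A}_1,\dots,\mathcal{A}_k,\Omega,C_1,\dots,C_k)$ be given by one of Variants I, II, III described in the context, let $\lambda>0$, and let $$F_\lambda(y)=f(y)+\delta_\Omega(y)+\sum_{i=1}^k\frac1{2\lambda}\mathrm{dist}^2(\mathcal{A}_i(y),C_i),\qquad h(y)=f(y)+\sum_{i=1}^k\frac1{2\lambda}\|\mathcal{A}_i(y)\|_F^2 .$$ Consider the following algorithm (vNPG$_{\rm major}$). Choose $y^0\in\Omega$, $L_{\max}>L_{\min}>0$, $\tau>1$, $c>0$ and an integer $M\ge 0$. At iteration $l=0,1,\dots$: pick any $\xi^l=\sum_{i=1}^k\frac1\lambda\mathcal{A}_i^*(Y_i)$ with $Y_i\in\mathcal{P}_{C_i}(\mathcal{A}_i(y^l))$, choose any $L_l^0\in[L_{\min},L_{\max}]$, and for $i=0,1,\dots$ set $L_{l,i}=L_l^0\tau^i$ and pick any $$u_i^l\in\mathcal{P}^s_\Omega\Big(y^l-\tfrac1{L_{l,i}}(\nabla h(y^l)-\xi^l);\,y^l\Big)$$ until some $u_i^l$ satisfies $$F_\lambda(u_i^l)\le\max_{[l-M]_+\le j\le l}F_\lambda(y^j)-\frac c2\|u_i^l-y^l\|^2 ;$$ then set $\bar L_l=L_{l,i}$ and $y^{l+1}=u_i^l$.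 Then: (i) for every $l$, the inner loop over $i$ terminates after finitely many steps (the line-search criterion is well-defined); (ii) the sequence $\{\bar L_l\}$ is bounded; (iii) for every $\epsilon>0$ there exists $l$ such that the following three conditions hold simultaneously: $$\|y^{l+1}-y^l\|\le\epsilon,\qquad F_\lambda(y^l)\le F_\lambda(y^0),$$ $$\mathrm{dist}\Big(0,\ \nabla f(y^l)+N_\Omega(y^{l+1})+\sum_{i=1}^k\frac1\lambda\mathcal{A}_i^*\big(\mathcal{A}_i(y^l)-\mathcal{P}_{C_i}(\mathcal{A}_i(y^l))\big)\Big)\le\epsilon .$$
   Context: For $x\in\mathbb{R}^n$ and an integer $1\le l\le n$, the Hankel matrix $\mathcal{H}_l(x)\in\mathbb{R}^{l\times(n-l+1)}$ has $(i,j)$ entry $x(i+j-1)$. For $y=(y_1^\top,\dots,y_N^\top)^\top\in\mathbb{R}^{Nn}$ with $y_i\in\mathbb{R}^n$, define linear maps $\mathcal{L}_i(y)=\mathcal{H}_{r_i+1}(y_i)$ ($i=1,\dots,N$) and $\mathcal{L}(y)=[\mathcal{H}_{r+1}(y_1)\ \cdots\ \mathcal{H}_{r+1}(y_N)]$. The three variants are: Variant I: $k=1$, $\mathcal{A}_1=\mathcal{L}$, $\Omega=\{y:\mathrm{rank}(\mathcal{L}_i(y))\le r_i,\ i=1,\dots,N\}$, $C_1=\{Y:\mathrm{rank}(Y)\le r\}$. Variant II: $k=N$, $\mathcal{A}_i=\mathcal{L}_i$, $\Omega=\{y:\mathrm{rank}(\mathcal{L}(y))\le r\}$, $C_i=\{Y:\mathrm{rank}(Y)\le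 r_i\}$. Variant III: $k=N+1$, $\mathcal{A}_i=\mathcal{L}_i$ ($i\le N$), $\mathcal{A}_{N+1}=\mathcal{L}$, $\Omega=\mathbb{R}^{Nn}$, $C_i=\{Y:\mathrm{rank}(Y)\le r_i\}$ ($i\le N$), $C_{N+1}=\{Y:\mathrm{rank}(Y)\le r\}$. Distances and projections $\mathcal{P}_{C}(X)$ (set of nearest points) for matrix sets use the Frobenius norm; $\mathcal{A}_i^*$ is the adjoint; $\delta_\Omega$ is the indicator function of $\Omega$; $N_\Omega(y)$ is the limiting (Mordukhovich) normal cone of $\Omega$ at $y$ in the sense of Rockafellar–Wets; set-valued expressions are Minkowski sums. Pseudo-projection: for a nonempty closed $\Omega\subseteq\mathbb{R}^m$, $u\in\Omega$, $x\in\mathbb{R}^m$, $\mathcal{P}^s_\Omega(x;u)$ is the set of all $y\in\Omega$ with $x-y\in N_\Omega(y)$ and $\|y-x\|\le\|u-x\|$. *)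

theory Defs
  imports "HOL-Analysis.Analysis" "Jordan_Normal_Form.DL_Rank"
begin

definition mrank :: "real Matrix.mat \<Rightarrow> nat" where
  "mrank A = vec_space.rank (dim_row A) A"

definition minner :: "real Matrix.mat \<Rightarrow> real Matrix.mat \<Rightarrow> real" where
  "minner X Y = (\<Sum>i<dim_row X. \<Sum>j<dim_col X. X $$ (i,j) * Y $$ (i,j))"

definition fro :: "real Matrix.mat \<Rightarrow> real" where
  "fro X = sqrt (\<Sum>i<dim_row X. \<Sum>j<dim_col X. (X $$ (i,j))\<^sup>2)"

definition mdist :: "real Matrix.mat \<Rightarrow> real Matrix.mat set \<Rightarrow> real" where
  "mdist X C = Inf ((\<lambda>Y. fro (X - Y)) ` C)"

definition mproj :: "real Matrix.mat set \<Rightarrow> real Matrix.mat \<Rightarrow> real Matrix.mat set" where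
  "mproj C X = {Y \<in> C. fro (X - Y) = mdist X C}"

definition rank_le :: "nat \<Rightarrow> nat \<Rightarrow> nat \<Rightarrow> real Matrix.mat set" where
  "rank_le m p \<rho> = {Y \<in> carrier_mat m p. mrank Y \<le> \<rho>}"

definition madj :: "(real^'d \<Rightarrow> real Matrix.mat) \<Rightarrow> real Matrix.mat \<Rightarrow> real^'d" where
  "madj A Y = (THE z. \<forall>x. z \<bullet> x = minner (A x) Y)"

(* Hankel matrix H_l(x) for x in R^n (0-indexed: entry (a,b) = x(a+b)) *)
definition hankel :: "nat \<Rightarrow> nat \<Rightarrow> (nat \<Rightarrow> real) \<Rightarrow> real Matrix.mat" where
  "hankel n l x = Matrix.mat l (n - l + 1) (\<lambda>(a,b). x (a + b))"

(* y in R^{Nn}: coordinates indexed by a type 'd, identified with {0..<N*n} by idx;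
   block i (0-indexed, i < N) is y_{i+1} in R^n *)
definition blk :: "nat \<Rightarrow> (nat \<Rightarrow> 'd) \<Rightarrow> nat \<Rightarrow> real^'d \<Rightarrow> nat \<Rightarrow> real" where
  "blk n idx i y j = y $ idx (i * n + j)"

definition Lsmall :: "nat \<Rightarrow> (nat \<Rightarrow> 'd) \<Rightarrow> (nat \<Rightarrow> nat) \<Rightarrow> nat \<Rightarrow> real^'d \<Rightarrow> real Matrix.mat" where
  "Lsmall n idx rs i y = hankel n (rs i + 1) (blk n idx i y)"

(* L(y) = [H_{r+1}(y_1) ... H_{r+1}(y_N)] *)
definition Lbig :: "nat \<Rightarrow> nat \<Rightarrow> (nat \<Rightarrow> 'd) \<Rightarrow> nat \<Rightarrow> real^'d \<Rightarrow> real Matrix.mat" where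
  "Lbig n N idx r y = Matrix.mat (r + 1) (N * (n - r))
      (\<lambda>(a,b). blk n idx (b div (n - r)) y (a + b mod (n - r)))"

datatype variant = VarI | VarII | VarIII

definition kk :: "variant \<Rightarrow> nat \<Rightarrow> nat" where
  "kk v N = (case v of VarI \<Rightarrow> 1 | VarII \<Rightarrow> N | VarIII \<Rightarrow> N + 1)"

(* A_{i+1} for i < k (0-indexed) *)
definition AA :: "variant \<Rightarrow> nat \<Rightarrow> nat \<Rightarrow> (nat \<Rightarrow> 'd) \<Rightarrow> nat \<Rightarrow> (nat \<Rightarrow> nat) \<Rightarrow> nat
                   \<Rightarrow> real^'d \<Rightarrow> real Matrix.mat" where
  "AA v n N idx r rs i = (case v of
      VarI \<Rightarrow> Lbig n N idx r
    | VarII \<Rightarrow> Lsmall n idx rs i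
    | VarIII \<Rightarrow> (if i < N then Lsmall n idx rs i else Lbig n N idx r))"

(* C_{i+1} for i < k (0-indexed), as a set of matrices of the size of the range of A_{i+1} *)
definition CC :: "variant \<Rightarrow> nat \<Rightarrow> nat \<Rightarrow> nat \<Rightarrow> (nat \<Rightarrow> nat) \<Rightarrow> nat \<Rightarrow> real Matrix.mat set" where
  "CC v n N r rs i = (case v of
      VarI \<Rightarrow> rank_le (r + 1) (N * (n - r)) r
    | VarII \<Rightarrow> rank_le (rs i + 1) (n - rs i) (rs i)
    | VarIII \<Rightarrow> (if i < N then rank_le (rs i + 1) (n - rs i) (rs i)
                else rank_le (r + 1) (N * (n - r)) r))"

definition Omega :: "variant \<Rightarrow> nat \<Rightarrow> nat \<Rightarrow> (nat \<Rightarrow> 'd) \<Rightarrow> nat \<Rightarrow> (nat \<Rightarrow> nat) \<Rightarrow> (real^'d) set" where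
  "Omega v n N idx r rs = (case v of
      VarI \<Rightarrow> {y. \<forall>i<N. mrank (Lsmall n idx rs i y) \<le> rs i}
    | VarII \<Rightarrow> {y. mrank (Lbig n N idx r y) \<le> r}
    | VarIII \<Rightarrow> UNIV)"

definition grad :: "(real^'d \<Rightarrow> real) \<Rightarrow> real^'d \<Rightarrow> real^'d" where
  "grad \<phi> x = (THE g. (\<phi> has_derivative (\<lambda>h. g \<bullet> h)) (at x))"

definition indic :: "'a set \<Rightarrow> 'a \<Rightarrow> ereal" where
  "indic S x = (if x \<in> S then 0 else \<infinity>)"

definition reg_normal_cone :: "(real^'d) set \<Rightarrow> real^'d \<Rightarrow> (real^'d) set" where
  "reg_normal_cone S x = (if x \<in> S then
     {v. \<forall>e>0. \<exists>d>0. \<forall>x'\<in>S. norm (x' - x) < d \<longrightarrow> v \<bullet> (x' - x) \<le> e * norm (x' - x)}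
   else {})"

definition normal_cone :: "(real^'d) set \<Rightarrow> real^'d \<Rightarrow> (real^'d) set" where
  "normal_cone S x = (if x \<in> S then
     {v. \<exists>xs vs. (\<forall>m. xs m \<in> S \<and> vs m \<in> reg_normal_cone S (xs m)) \<and>
                 xs \<longlonglongrightarrow> x \<and> vs \<longlonglongrightarrow> v}
   else {})"

definition pproj :: "(real^'d) set \<Rightarrow> real^'d \<Rightarrow> real^'d \<Rightarrow> (real^'d) set" where
  "pproj S x u = {y \<in> S. x - y \<in> normal_cone S y \<and> norm (y - x) \<le> norm (u - x)}"

definition Flam :: "variant \<Rightarrow> nat \<Rightarrow> nat \<Rightarrow> (nat \<Rightarrow> 'd) \<Rightarrow> nat \<Rightarrow> (nat \<Rightarrow> nat)
                    \<Rightarrow> (real^'d \<Rightarrow> real) \<Rightarrow> real \<Rightarrow> real^'d \<Rightarrow> ereal" where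
  "Flam v n N idx r rs f lam y =
     ereal (f y) + indic (Omega v n N idx r rs) y
     + ereal (\<Sum>i<kk v N. 1 / (2 * lam) * (mdist (AA v n N idx r rs i y) (CC v n N r rs i))\<^sup>2)"

definition hfun :: "variant \<Rightarrow> nat \<Rightarrow> nat \<Rightarrow> (nat \<Rightarrow> 'd) \<Rightarrow> nat \<Rightarrow> (nat \<Rightarrow> nat)
                    \<Rightarrow> (real^'d \<Rightarrow> real) \<Rightarrow> real \<Rightarrow> real^'d \<Rightarrow> real" where
  "hfun v n N idx r rs f lam y =
     f y + (\<Sum>i<kk v N. 1 / (2 * lam) * (fro (AA v n N idx r rs i y))\<^sup>2)"

definition xi_ok :: "variant \<Rightarrow> nat \<Rightarrow> nat \<Rightarrow> (nat \<Rightarrow> 'd) \<Rightarrow> nat \<Rightarrow> (nat \<Rightarrow> nat)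
                     \<Rightarrow> real \<Rightarrow> real^'d \<Rightarrow> real^'d \<Rightarrow> bool" where
  "xi_ok v n N idx r rs lam y xi \<longleftrightarrow>
     (\<exists>Y. (\<forall>i<kk v N. Y i \<in> mproj (CC v n N r rs i) (AA v n N idx r rs i y)) \<and>
          xi = (\<Sum>i<kk v N. (1 / lam) *\<^sub>R madj (AA v n N idx r rs i) (Y i)))"

definition accept :: "variant \<Rightarrow> nat \<Rightarrow> nat \<Rightarrow> (nat \<Rightarrow> 'd) \<Rightarrow> nat \<Rightarrow> (nat \<Rightarrow> nat)
                      \<Rightarrow> (real^'d \<Rightarrow> real) \<Rightarrow> real \<Rightarrow> real \<Rightarrow> nat
                      \<Rightarrow> (nat \<Rightarrow> real^'d) \<Rightarrow> nat \<Rightarrow> real^'d \<Rightarrow> bool" where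
  "accept v n N idx r rs f lam c M y l u \<longleftrightarrow>
     Flam v n N idx r rs f lam u
       \<le> Max ((\<lambda>j. Flam v n N idx r rs f lam (y j)) ` {l - M..l})
          - ereal (c / 2 * (norm (u - y l))\<^sup>2)"

definition candidate :: "variant \<Rightarrow> nat \<Rightarrow> nat \<Rightarrow> (nat \<Rightarrow> 'd) \<Rightarrow> nat \<Rightarrow> (nat \<Rightarrow> nat)
                         \<Rightarrow> (real^'d \<Rightarrow> real) \<Rightarrow> real \<Rightarrow> real^'d \<Rightarrow> real^'d \<Rightarrow> real
                         \<Rightarrow> real^'d \<Rightarrow> bool" where
  "candidate v n N idx r rs f lam yl xi L u \<longleftrightarrow>
     u \<in> pproj (Omega v n N idx r rs)
            (yl - (1 / L) *\<^sub>R (grad (hfun v n N idx r rs f lam) yl - xi)) yl"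

definition vnpg_step :: "variant \<Rightarrow> nat \<Rightarrow> nat \<Rightarrow> (nat \<Rightarrow> 'd) \<Rightarrow> nat \<Rightarrow> (nat \<Rightarrow> nat)
                         \<Rightarrow> (real^'d \<Rightarrow> real) \<Rightarrow> real \<Rightarrow> real \<Rightarrow> real \<Rightarrow> real \<Rightarrow> real \<Rightarrow> nat
                         \<Rightarrow> (nat \<Rightarrow> real^'d) \<Rightarrow> nat \<Rightarrow> real \<Rightarrow> bool" where
  "vnpg_step v n N idx r rs f lam Lmin Lmax tau c M y l Lb \<longleftrightarrow>
     (\<exists>xi L0 it u.
        xi_ok v n N idx r rs lam (y l) xi \<and> Lmin \<le> L0 \<and> L0 \<le> Lmax \<and>
        (\<forall>i\<le>it. candidate v n N idx r rs f lam (y l) xi (L0 * tau ^ i) (u i)) \<and>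
        (\<forall>i<it. \<not> accept v n N idx r rs f lam c M y l (u i)) \<and>
        accept v n N idx r rs f lam c M y l (u it) \<and>
        Lb = L0 * tau ^ it \<and> y (Suc l) = u it)"

definition vnpg_prefix :: "variant \<Rightarrow> nat \<Rightarrow> nat \<Rightarrow> (nat \<Rightarrow> 'd) \<Rightarrow> nat \<Rightarrow> (nat \<Rightarrow> nat)
                         \<Rightarrow> (real^'d \<Rightarrow> real) \<Rightarrow> real \<Rightarrow> real \<Rightarrow> real \<Rightarrow> real \<Rightarrow> real \<Rightarrow> nat
                         \<Rightarrow> nat \<Rightarrow> (nat \<Rightarrow> real^'d) \<Rightarrow> bool" where
  "vnpg_prefix v n N idx r rs f lam Lmin Lmax tau c M l y \<longleftrightarrow>
     y 0 \<in> Omega v n N idx r rs \<and>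
     (\<forall>l'<l. \<exists>Lb. vnpg_step v n N idx r rs f lam Lmin Lmax tau c M y l' Lb)"

definition vnpg_run :: "variant \<Rightarrow> nat \<Rightarrow> nat \<Rightarrow> (nat \<Rightarrow> 'd) \<Rightarrow> nat \<Rightarrow> (nat \<Rightarrow> nat)
                         \<Rightarrow> (real^'d \<Rightarrow> real) \<Rightarrow> real \<Rightarrow> real \<Rightarrow> real \<Rightarrow> real \<Rightarrow> real \<Rightarrow> nat
                         \<Rightarrow> (nat \<Rightarrow> real^'d) \<Rightarrow> (nat \<Rightarrow> real) \<Rightarrow> bool" where
  "vnpg_run v n N idx r rs f lam Lmin Lmax tau c M y Lbar \<longleftrightarrow>
     y 0 \<in> Omega v n N idx r rs \<and>
     (\<forall>l. vnpg_step v n N idx r rs f lam Lmin Lmax tau c M y l (Lbar l))"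

definition stat_set :: "variant \<Rightarrow> nat \<Rightarrow> nat \<Rightarrow> (nat \<Rightarrow> 'd) \<Rightarrow> nat \<Rightarrow> (nat \<Rightarrow> nat)
                        \<Rightarrow> (real^'d \<Rightarrow> real) \<Rightarrow> real \<Rightarrow> real^'d \<Rightarrow> real^'d \<Rightarrow> (real^'d) set" where
  "stat_set v n N idx r rs f lam yl ynext =
     {grad f yl + w + (\<Sum>i<kk v N. (1 / lam) *\<^sub>R
                          madj (AA v n N idx r rs i) (AA v n N idx r rs i yl - Y i)) | w Y.
        w \<in> normal_cone (Omega v n N idx r rs) ynext \<and>
        (\<forall>i<kk v N. Y i \<in> mproj (CC v n N r rs i) (AA v n N idx r rs i yl))}"

end

theory Submission
  imports Defs
begin

(* Every map A_i selects coordinates of y into a matrix, so dist^2(A_i y, C_i) is majorized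
   everywhere by the quadratic ||A_i y - Y_i||^2 with Y_i in P_{C_i}(A_i y^l), whose gradient is
   A_i^*(A_i y^l - Y_i).  Together with the descent lemma for f this shows that a pseudo-projected
   gradient step with constant L decreases F_lambda by at least (L/2 - L_f - K) ||u - y^l||^2,
   K = sum_i p_i q_i / (2 lambda).  Hence every trial constant L >= 2 (L_f + K) + c is accepted:
   the line search terminates and \bar L_l <= max L_max (tau (2 (L_f + K) + c)).
   Along a run, the maximum of F_lambda over the last M+1 iterates drops by a fixed amount every
   M+1 steps as long as the steps stay large; as F_lambda >= 0, some step is small.  The
   optimality condition of the pseudo-projection, scaled by \bar L_l, then exhibits a point of the
   stationarity set of norm \bar L_l ||y^{l+1} - y^l||. *)

lemma grad_eqI:
  fixes \<phi> :: "real^'d \<Rightarrow> real"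
  assumes "(\<phi> has_derivative (\<lambda>h. g \<bullet> h)) (at x)"
  shows "grad \<phi> x = g"
  unfolding grad_def
proof (rule the_equality)
  fix g' assume "(\<phi> has_derivative (\<lambda>h. g' \<bullet> h)) (at x)"
  from this assms have "(\<lambda>h. g' \<bullet> h) = (\<lambda>h. g \<bullet> h)" by (rule has_derivative_unique)
  then show "g' = g" by (metis vector_eq_rdot)
qed (fact assms)

lemma has_derivative_grad:
  fixes f :: "real^'d \<Rightarrow> real"
  assumes "f differentiable (at x)"
  shows "(f has_derivative (\<lambda>h. grad f x \<bullet> h)) (at x)"
proof -
  obtain D where D: "(f has_derivative D) (at x)" using assms differentiable_def by blast
  have "D h = adjoint D 1 \<bullet> h" for h
    using adjoint_works[OF has_derivative_linear[OF D], of h 1] by (simp add: inner_commute)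
  then have "D = (\<lambda>h. adjoint D 1 \<bullet> h)" by blast
  with D show ?thesis by (metis grad_eqI)
qed

(* The mean value inequality yields the constant L instead of the sharp L/2. *)
lemma lipschitz_grad_descent:
  fixes f :: "real^'d \<Rightarrow> real"
  assumes f_diff: "\<And>y. f differentiable (at y)" and lip: "L-lipschitz_on UNIV (grad f)"
  shows "f u - f y - grad f y \<bullet> (u - y) \<le> L * (norm (u - y))\<^sup>2"
proof -
  define g where "g x = f x - grad f y \<bullet> x" for x
  have L: "0 \<le> L" using lip lipschitz_on_nonneg by blast
  have "(g has_derivative (\<lambda>h. (grad f x - grad f y) \<bullet> h)) (at x within closed_segment y u)" for x
  proof -
    have "(g has_derivative (\<lambda>h. grad f x \<bullet> h - grad f y \<bullet> h)) (at x)"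
      unfolding g_def by (auto intro!: derivative_eq_intros has_derivative_grad f_diff)
    then show ?thesis by (auto simp: inner_diff_left intro: has_derivative_at_withinI)
  qed
  moreover have "onorm (\<lambda>h. (grad f x - grad f y) \<bullet> h) \<le> L * norm (u - y)"
    if "x \<in> closed_segment y u" for x
  proof (rule onorm_le)
    fix h
    have "norm ((grad f x - grad f y) \<bullet> h) \<le> norm (grad f x - grad f y) * norm h"
      using Cauchy_Schwarz_ineq2 by simp
    also have "norm (grad f x - grad f y) \<le> L * norm (x - y)"
      using lip unfolding lipschitz_on_def by (simp add: dist_norm)
    also have "norm (x - y) \<le> norm (u - y)"
      using that by (metis dist_commute dist_in_closed_segment dist_norm)
    finally show "norm ((grad f x - grad f y) \<bullet> h) \<le> L * norm (u - y) * norm h"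
      using L by (simp add: mult_right_mono mult_left_mono)
  qed
  ultimately have "norm (g u - g y) \<le> L * norm (u - y) * norm (u - y)"
    by (intro differentiable_bound[OF convex_closed_segment]) auto
  moreover have "g u - g y = f u - f y - grad f y \<bullet> (u - y)"
    by (simp add: g_def inner_diff_right)
  ultimately show ?thesis by (simp add: power2_eq_square mult.assoc)
qed

section \<open>Coordinate-selection maps into matrices\<close>

definition coord_mat :: "nat \<Rightarrow> nat \<Rightarrow> (nat \<times> nat \<Rightarrow> 'd) \<Rightarrow> real^'d \<Rightarrow> real Matrix.mat" where
  "coord_mat p q \<phi> y = Matrix.mat p q (\<lambda>ab. y $ \<phi> ab)"

lemma coord_mat_carrier [simp]: "coord_mat p q \<phi> y \<in> carrier_mat p q"
  and dim_row_coord_mat [simp]: "dim_row (coord_mat p q \<phi> y) = p"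
  and dim_col_coord_mat [simp]: "dim_col (coord_mat p q \<phi> y) = q"
  by (simp_all add: coord_mat_def)

lemma index_coord_mat [simp]: "a < p \<Longrightarrow> b < q \<Longrightarrow> coord_mat p q \<phi> y $$ (a,b) = y $ \<phi> (a,b)"
  by (simp add: coord_mat_def)

lemma fro_squared: "X \<in> carrier_mat p q \<Longrightarrow> (fro X)\<^sup>2 = (\<Sum>a<p. \<Sum>b<q. (X $$ (a,b))\<^sup>2)"
  unfolding fro_def by (simp add: sum_nonneg)

lemma fro_nonneg: "0 \<le> fro X"
  unfolding fro_def by (simp add: sum_nonneg)

lemma inner_madj_coord_mat:
  fixes \<phi> :: "nat \<times> nat \<Rightarrow> 'd::finite"
  shows "madj (coord_mat p q \<phi>) Y \<bullet> x = (\<Sum>a<p. \<Sum>b<q. x $ \<phi> (a,b) * Y $$ (a,b))"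
proof -
  define z :: "real^'d" where "z = (\<Sum>a<p. \<Sum>b<q. axis (\<phi> (a,b)) (Y $$ (a,b)))"
  have z: "z \<bullet> x = (\<Sum>a<p. \<Sum>b<q. x $ \<phi> (a,b) * Y $$ (a,b))" for x
    by (simp add: z_def inner_sum_left inner_axis' mult.commute)
  have "madj (coord_mat p q \<phi>) Y = z"
    unfolding madj_def
  proof (rule the_equality)
    show "\<forall>x. z \<bullet> x = minner (coord_mat p q \<phi> x) Y" by (simp add: z minner_def)
    fix z' assume "\<forall>x. z' \<bullet> x = minner (coord_mat p q \<phi> x) Y"
    then have "\<forall>x. z' \<bullet> x = z \<bullet> x" by (simp add: z minner_def)
    then show "z' = z" by (simp add: vector_eq_rdot)
  qed
  then show ?thesis by (simp add: z)
qed

lemma madj_coord_mat_diff: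
  assumes "X \<in> carrier_mat p q" "Y \<in> carrier_mat p q"
  shows "madj (coord_mat p q \<phi>) (X - Y) = madj (coord_mat p q \<phi>) X - madj (coord_mat p q \<phi>) Y"
proof -
  have "madj (coord_mat p q \<phi>) (X - Y) \<bullet> x
      = (madj (coord_mat p q \<phi>) X - madj (coord_mat p q \<phi>) Y) \<bullet> x" for x
    using assms by (simp add: inner_madj_coord_mat inner_diff_left right_diff_distrib sum_subtractf)
  then show ?thesis using vector_eq_rdot by blast
qed

lemma has_derivative_fro_squared_coord_mat:
  "((\<lambda>y. (fro (coord_mat p q \<phi> y))\<^sup>2) has_derivative
     (\<lambda>h. (2 *\<^sub>R madj (coord_mat p q \<phi>) (coord_mat p q \<phi> y)) \<bullet> h)) (at y)"
proof -
  have "((\<lambda>y. \<Sum>a<p. \<Sum>b<q. (y $ \<phi> (a,b))\<^sup>2) has_derivative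
         (\<lambda>h. \<Sum>a<p. \<Sum>b<q. 2 * (y $ \<phi> (a,b)) * (h $ \<phi> (a,b)))) (at y)"
    by (auto intro!: derivative_eq_intros bounded_linear_imp_has_derivative bounded_linear_vec_nth
        simp: power2_eq_square mult_ac)
  then show ?thesis
    by (simp add: fro_squared[OF coord_mat_carrier] inner_madj_coord_mat sum_distrib_left mult_ac)
qed

lemma mdist_le: "Y \<in> C \<Longrightarrow> mdist X C \<le> fro (X - Y)"
  unfolding mdist_def by (rule cInf_lower) (auto intro!: bdd_belowI[where m=0] fro_nonneg)

lemma mdist_nonneg: "Y \<in> C \<Longrightarrow> 0 \<le> mdist X C"
  unfolding mdist_def by (rule cInf_greatest) (auto intro!: fro_nonneg)

lemma mdist_squared_coord_mat_le:
  fixes p q :: nat and \<phi> :: "nat \<times> nat \<Rightarrow> 'd::finite"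
  defines "A \<equiv> coord_mat p q \<phi>"
  assumes C: "C \<subseteq> carrier_mat p q" and Y: "Y \<in> mproj C (A y)"
  shows "(mdist (A u) C)\<^sup>2 - (mdist (A y) C)\<^sup>2
           \<le> real (p * q) * (norm (u - y))\<^sup>2 + 2 * (madj A (A y - Y) \<bullet> (u - y))"
proof -
  have YC: "Y \<in> C" and Y_dist: "fro (A y - Y) = mdist (A y) C"
    using Y by (auto simp: mproj_def)
  have Y_carrier: "Y \<in> carrier_mat p q" using YC C by auto
  have u: "(mdist (A u) C)\<^sup>2 \<le> (\<Sum>a<p. \<Sum>b<q. (u $ \<phi> (a,b) - Y $$ (a,b))\<^sup>2)"
  proof -
    have "(mdist (A u) C)\<^sup>2 \<le> (fro (A u - Y))\<^sup>2"
      using YC by (intro power_mono mdist_le mdist_nonneg[OF YC])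
    also have "\<dots> = (\<Sum>a<p. \<Sum>b<q. (u $ \<phi> (a,b) - Y $$ (a,b))\<^sup>2)"
      using Y_carrier unfolding A_def by (subst fro_squared[where p=p and q=q]) auto
    finally show ?thesis .
  qed
  have y: "(mdist (A y) C)\<^sup>2 = (\<Sum>a<p. \<Sum>b<q. (y $ \<phi> (a,b) - Y $$ (a,b))\<^sup>2)"
    unfolding Y_dist[symmetric] using Y_carrier unfolding A_def
    by (subst fro_squared[where p=p and q=q]) auto
  have adj: "madj A (A y - Y) \<bullet> (u - y)
      = (\<Sum>a<p. \<Sum>b<q. (u - y) $ \<phi> (a,b) * (y $ \<phi> (a,b) - Y $$ (a,b)))"
    using Y_carrier unfolding A_def by (simp add: inner_madj_coord_mat)
  have "(\<Sum>a<p. \<Sum>b<q. (u $ \<phi> (a,b) - Y $$ (a,b))\<^sup>2) - (\<Sum>a<p. \<Sum>b<q. (y $ \<phi> (a,b) - Y $$ (a,b))\<^sup>2)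
       - 2 * (\<Sum>a<p. \<Sum>b<q. (u - y) $ \<phi> (a,b) * (y $ \<phi> (a,b) - Y $$ (a,b)))
     = (\<Sum>a<p. \<Sum>b<q. ((u - y) $ \<phi> (a,b))\<^sup>2)"
    by (simp add: sum_subtractf[symmetric] sum_distrib_left power2_eq_square algebra_simps)
  also have "\<dots> \<le> (\<Sum>a<p. \<Sum>b<q. (norm (u - y))\<^sup>2)"
    by (intro sum_mono) (metis abs_le_square_iff component_le_norm_cart real_norm_def abs_norm_cancel)
  finally show ?thesis using u y adj by simp
qed

section \<open>Nonmonotone descent\<close>

(* Truncated subtraction makes the window {[l - M]_+..l}, as in the acceptance rule. *)
definition window_max :: "(nat \<Rightarrow> real) \<Rightarrow> nat \<Rightarrow> nat \<Rightarrow> real" where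
  "window_max \<phi> M l = Max (\<phi> ` {l - M..l})"

lemma window_max_ge: "l - M \<le> j \<Longrightarrow> j \<le> l \<Longrightarrow> \<phi> j \<le> window_max \<phi> M l"
  unfolding window_max_def by (intro Max_ge) auto

lemma window_max_le_iff: "window_max \<phi> M l \<le> a \<longleftrightarrow> (\<forall>j\<in>{l - M..l}. \<phi> j \<le> a)"
  unfolding window_max_def by (subst Max_le_iff) auto

lemma window_max_antimono:
  assumes step: "\<And>l. \<phi> (Suc l) \<le> window_max \<phi> M l" and "l \<le> l'"
  shows "window_max \<phi> M l' \<le> window_max \<phi> M l"
proof (rule lift_Suc_antimono_le[OF _ \<open>l \<le> l'\<close>])
  fix l
  show "window_max \<phi> M (Suc l) \<le> window_max \<phi> M l"
    unfolding window_max_le_iff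
  proof
    fix j assume "j \<in> {Suc l - M..Suc l}"
    then consider "j = Suc l" | "l - M \<le> j" "j \<le> l" by fastforce
    then show "\<phi> j \<le> window_max \<phi> M l" by cases (use step window_max_ge in auto)
  qed
qed

lemma nonmonotone_le_initial:
  assumes step: "\<And>l. \<phi> (Suc l) \<le> window_max \<phi> M l - d l" and "\<And>l. 0 \<le> d l"
  shows "\<phi> l \<le> \<phi> 0"
proof -
  have step': "\<phi> (Suc l) \<le> window_max \<phi> M l" for l using step[of l] assms(2)[of l] by linarith
  have "\<phi> l \<le> window_max \<phi> M l" by (rule window_max_ge) auto
  also have "\<dots> \<le> window_max \<phi> M 0" by (rule window_max_antimono[OF step']) simp
  finally show ?thesis by (simp add: window_max_def)
qed

lemma window_max_drop:
  assumes step: "\<And>l. \<phi> (Suc l) \<le> window_max \<phi> M l - d l"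
    and big: "\<And>l. \<delta> < d l" and "0 \<le> \<delta>"
  shows "window_max \<phi> M (l + Suc M) \<le> window_max \<phi> M l - \<delta>"
  unfolding window_max_le_iff
proof
  have step': "\<phi> (Suc l) \<le> window_max \<phi> M l" for l
    using step[of l] big[of l] \<open>0 \<le> \<delta>\<close> by linarith
  fix j assume "j \<in> {l + Suc M - M..l + Suc M}"
  then have j: "j = Suc (j - 1)" "l \<le> j - 1" by auto
  have "\<phi> j \<le> window_max \<phi> M (j - 1) - d (j - 1)" using step[of "j - 1"] j(1) by simp
  also have "\<dots> \<le> window_max \<phi> M l - \<delta>"
    using window_max_antimono[OF step' j(2)] big[of "j - 1"] by linarith
  finally show "\<phi> j \<le> window_max \<phi> M l - \<delta>" .
qed

lemma nonmonotone_small_decrease: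
  assumes step: "\<And>l. \<phi> (Suc l) \<le> window_max \<phi> M l - d l"
    and nonneg: "\<And>l. 0 \<le> \<phi> l" and "0 < \<delta>"
  shows "\<exists>l. d l \<le> \<delta>"
proof (rule ccontr)
  assume "\<not> (\<exists>l. d l \<le> \<delta>)"
  then have big: "\<And>l. \<delta> < d l" by (meson not_le)
  have W: "window_max \<phi> M (m * Suc M) \<le> window_max \<phi> M 0 - real m * \<delta>" for m
  proof (induction m)
    case (Suc m)
    then show ?case
      using window_max_drop[OF step big, of "m * Suc M"] \<open>0 < \<delta>\<close> by (simp add: algebra_simps)
  qed simp
  obtain m where m: "window_max \<phi> M 0 < real m * \<delta>"
    using ex_less_of_nat_mult[OF \<open>0 < \<delta>\<close>] by blast
  have "0 \<le> window_max \<phi> M (m * Suc M)"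
    using nonneg[of "m * Suc M"] window_max_ge[of "m * Suc M" M "m * Suc M" \<phi>] by linarith
  with W[of m] m show False by simp
qed

section \<open>Normal cones and pseudo-projections\<close>

lemma reg_normal_cone_scaleR:
  assumes v: "v \<in> reg_normal_cone S x" and a: "0 < a"
  shows "a *\<^sub>R v \<in> reg_normal_cone S x"
proof -
  have x: "x \<in> S" using v by (simp add: reg_normal_cone_def split: if_splits)
  have "\<exists>d>0. \<forall>x'\<in>S. norm (x' - x) < d \<longrightarrow> (a *\<^sub>R v) \<bullet> (x' - x) \<le> e * norm (x' - x)"
    if "e > 0" for e
  proof -
    have "\<forall>e>0. \<exists>d>0. \<forall>x'\<in>S. norm (x' - x) < d \<longrightarrow> v \<bullet> (x' - x) \<le> e * norm (x' - x)"
      using v x by (simp add: reg_normal_cone_def)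
    moreover have "e / a > 0" using \<open>e > 0\<close> a by simp
    ultimately obtain d where "d > 0"
      and d: "\<forall>x'\<in>S. norm (x' - x) < d \<longrightarrow> v \<bullet> (x' - x) \<le> e / a * norm (x' - x)"
      by blast
    have "(a *\<^sub>R v) \<bullet> (x' - x) \<le> e * norm (x' - x)" if "x' \<in> S" "norm (x' - x) < d" for x'
      using mult_left_mono[OF d[rule_format, OF that] less_imp_le[OF a]] a by simp
    with \<open>d > 0\<close> show ?thesis by blast
  qed
  with x show ?thesis by (simp add: reg_normal_cone_def)
qed

lemma normal_cone_scaleR:
  assumes v: "v \<in> normal_cone S x" and a: "0 < a"
  shows "a *\<^sub>R v \<in> normal_cone S x"
proof -
  have x: "x \<in> S" using v by (simp add: normal_cone_def split: if_splits)
  obtain xs vs where seq: "\<forall>m. xs m \<in> S \<and> vs m \<in> reg_normal_cone S (xs m)"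
    and "xs \<longlonglongrightarrow> x" "vs \<longlonglongrightarrow> v"
    using v x by (auto simp: normal_cone_def)
  moreover have "\<forall>m. a *\<^sub>R vs m \<in> reg_normal_cone S (xs m)"
    using seq reg_normal_cone_scaleR a by blast
  moreover have "(\<lambda>m. a *\<^sub>R vs m) \<longlonglongrightarrow> a *\<^sub>R v" using \<open>vs \<longlonglongrightarrow> v\<close> by (intro tendsto_intros)
  ultimately have "\<exists>xs vs. (\<forall>m. xs m \<in> S \<and> vs m \<in> reg_normal_cone S (xs m)) \<and>
      xs \<longlonglongrightarrow> x \<and> vs \<longlonglongrightarrow> a *\<^sub>R v"
    by (intro exI[of _ xs] exI[of _ "\<lambda>m. a *\<^sub>R vs m"]) simp
  with x show ?thesis by (simp add: normal_cone_def)
qed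

lemma closer_than_gradient_step_inner_le:
  fixes g u y :: "'a::real_inner"
  assumes "norm (u - (y - (1/L) *\<^sub>R g)) \<le> norm (y - (y - (1/L) *\<^sub>R g))" and "0 < L"
  shows "g \<bullet> (u - y) \<le> - (L/2) * (norm (u - y))\<^sup>2"
proof -
  define d where "d = u - y"
  define h where "h = (1/L) *\<^sub>R g"
  have "(norm (d + h))\<^sup>2 \<le> (norm h)\<^sup>2"
    using assms(1) by (intro power_mono) (simp_all add: d_def h_def algebra_simps)
  moreover have "(norm d)\<^sup>2 + 2 * (d \<bullet> h) = (norm (d + h))\<^sup>2 - (norm h)\<^sup>2"
    using dot_norm[of d h] by simp
  ultimately have "(norm d)\<^sup>2 + 2 * (d \<bullet> h) \<le> 0" by simp
  then have "(norm d)\<^sup>2 + 2 / L * (g \<bullet> d) \<le> 0" by (simp add: h_def inner_commute)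
  with \<open>0 < L\<close> show ?thesis by (simp add: d_def field_simps)
qed

section \<open>Line search and stationarity\<close>

locale vnpg_setting =
  fixes v :: variant and n N r :: nat and rs :: "nat \<Rightarrow> nat" and idx :: "nat \<Rightarrow> 'd::finite"
    and P Q :: "nat \<Rightarrow> nat" and \<Phi> :: "nat \<Rightarrow> nat \<times> nat \<Rightarrow> 'd"
    and f :: "real^'d \<Rightarrow> real" and lam Lf :: real
  assumes AA_coord_mat: "\<And>i. i < kk v N \<Longrightarrow> AA v n N idx r rs i = coord_mat (P i) (Q i) (\<Phi> i)"
    and CC_carrier: "\<And>i. i < kk v N \<Longrightarrow> CC v n N r rs i \<subseteq> carrier_mat (P i) (Q i)"
    and f_differentiable: "\<And>y. f differentiable (at y)"
    and grad_lipschitz: "Lf-lipschitz_on UNIV (grad f)"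
    and lam_pos: "0 < lam"
    and f_nonneg: "\<And>y. 0 \<le> f y"
begin

abbreviation "k \<equiv> kk v N"
abbreviation "A \<equiv> AA v n N idx r rs"
abbreviation "C \<equiv> CC v n N r rs"
abbreviation "\<Omega> \<equiv> Omega v n N idx r rs"

definition penalty :: "real^'d \<Rightarrow> real" where
  "penalty z = (\<Sum>i<k. 1 / (2 * lam) * (mdist (A i z) (C i))\<^sup>2)"

definition Freal :: "real^'d \<Rightarrow> real" where
  "Freal z = f z + penalty z"

definition K :: real where
  "K = (\<Sum>i<k. real (P i * Q i) / (2 * lam))"

lemma Flam_eq_Freal: "z \<in> \<Omega> \<Longrightarrow> Flam v n N idx r rs f lam z = ereal (Freal z)"
  unfolding Flam_def indic_def Freal_def penalty_def by simp

lemma Freal_nonneg: "0 \<le> Freal z"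
  unfolding Freal_def penalty_def using f_nonneg lam_pos by (auto intro!: add_nonneg_nonneg sum_nonneg)

lemma grad_hfun:
  "grad (hfun v n N idx r rs f lam) y = grad f y + (\<Sum>i<k. (1 / lam) *\<^sub>R madj (A i) (A i y))"
proof (rule grad_eqI)
  have "((\<lambda>y. 1 / (2 * lam) * (fro (A i y))\<^sup>2) has_derivative
          (\<lambda>h. ((1 / lam) *\<^sub>R madj (A i) (A i y)) \<bullet> h)) (at y)" if "i \<in> {..<k}" for i
    unfolding AA_coord_mat[OF that[simplified]]
    by (rule has_derivative_eq_rhs[OF has_derivative_mult_right[OF has_derivative_fro_squared_coord_mat]])
       (use lam_pos in \<open>auto simp: fun_eq_iff\<close>)
  then have "(hfun v n N idx r rs f lam has_derivative
      (\<lambda>h. grad f y \<bullet> h + (\<Sum>i<k. ((1 / lam) *\<^sub>R madj (A i) (A i y)) \<bullet> h))) (at y)"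
    unfolding hfun_def[abs_def]
    by (intro has_derivative_add has_derivative_grad f_differentiable has_derivative_sum)
  then show "(hfun v n N idx r rs f lam has_derivative
      (\<lambda>h. (grad f y + (\<Sum>i<k. (1 / lam) *\<^sub>R madj (A i) (A i y))) \<bullet> h)) (at y)"
    by (simp add: inner_add_left inner_sum_left)
qed

lemma grad_hfun_minus_xi:
  assumes "\<forall>i<k. Y i \<in> mproj (C i) (A i y)"
  shows "grad (hfun v n N idx r rs f lam) y - (\<Sum>i<k. (1 / lam) *\<^sub>R madj (A i) (Y i))
           = grad f y + (\<Sum>i<k. (1 / lam) *\<^sub>R madj (A i) (A i y - Y i))"
proof -
  have "madj (A i) (A i y - Y i) = madj (A i) (A i y) - madj (A i) (Y i)" if "i \<in> {..<k}" for i
    using assms CC_carrier that unfolding AA_coord_mat[OF that[simplified]]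
    by (intro madj_coord_mat_diff) (auto simp: mproj_def)
  then have "(\<Sum>i<k. (1 / lam) *\<^sub>R madj (A i) (A i y - Y i))
      = (\<Sum>i<k. (1 / lam) *\<^sub>R madj (A i) (A i y) - (1 / lam) *\<^sub>R madj (A i) (Y i))"
    by (intro sum.cong) (simp_all add: scaleR_diff_right)
  then show ?thesis by (simp add: grad_hfun sum_subtractf)
qed

lemma candidate_mem_Omega: "candidate v n N idx r rs f lam y xi L u \<Longrightarrow> u \<in> \<Omega>"
  unfolding candidate_def pproj_def by auto

lemma penalty_le_linearization:
  assumes Y: "\<forall>i<k. Y i \<in> mproj (C i) (A i y)"
  shows "penalty u \<le> penalty y + (\<Sum>i<k. (1 / lam) *\<^sub>R madj (A i) (A i y - Y i)) \<bullet> (u - y)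
                       + K * (norm (u - y))\<^sup>2"
proof -
  have "1 / (2 * lam) * (mdist (A i u) (C i))\<^sup>2 \<le> 1 / (2 * lam) * (mdist (A i y) (C i))\<^sup>2
          + ((1 / lam) *\<^sub>R madj (A i) (A i y - Y i)) \<bullet> (u - y)
          + real (P i * Q i) / (2 * lam) * (norm (u - y))\<^sup>2" if "i \<in> {..<k}" for i
  proof -
    have i: "i < k" using that by simp
    have "Y i \<in> mproj (C i) (A i y)" using Y i by blast
    from mdist_squared_coord_mat_le[OF CC_carrier[OF i] this[unfolded AA_coord_mat[OF i]], of u]
    have "(mdist (A i u) (C i))\<^sup>2 - (mdist (A i y) (C i))\<^sup>2
        \<le> real (P i * Q i) * (norm (u - y))\<^sup>2 + 2 * (madj (A i) (A i y - Y i) \<bullet> (u - y))"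
      unfolding AA_coord_mat[OF i] .
    with lam_pos show ?thesis by (simp add: field_simps)
  qed
  then have "penalty u \<le> (\<Sum>i<k. 1 / (2 * lam) * (mdist (A i y) (C i))\<^sup>2
          + ((1 / lam) *\<^sub>R madj (A i) (A i y - Y i)) \<bullet> (u - y)
          + real (P i * Q i) / (2 * lam) * (norm (u - y))\<^sup>2)"
    unfolding penalty_def by (rule sum_mono)
  then show ?thesis by (simp add: penalty_def K_def sum.distrib inner_sum_left sum_distrib_right)
qed

lemma candidate_sufficient_decrease:
  assumes xi: "xi_ok v n N idx r rs lam y xi" and "0 < L"
    and cand: "candidate v n N idx r rs f lam y xi L u"
  shows "Freal u \<le> Freal y + (Lf + K - L / 2) * (norm (u - y))\<^sup>2"
proof -
  obtain Y where Y: "\<forall>i<k. Y i \<in> mproj (C i) (A i y)"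
    and xi_eq: "xi = (\<Sum>i<k. (1 / lam) *\<^sub>R madj (A i) (Y i))"
    using xi unfolding xi_ok_def by blast
  define S where "S = (\<Sum>i<k. (1 / lam) *\<^sub>R madj (A i) (A i y - Y i))"
  have "grad (hfun v n N idx r rs f lam) y - xi = grad f y + S"
    unfolding S_def xi_eq by (rule grad_hfun_minus_xi[OF Y])
  with cand \<open>0 < L\<close> have "(grad f y + S) \<bullet> (u - y) \<le> - (L / 2) * (norm (u - y))\<^sup>2"
    unfolding candidate_def pproj_def by (intro closer_than_gradient_step_inner_le) auto
  moreover have "f u - f y - grad f y \<bullet> (u - y) \<le> Lf * (norm (u - y))\<^sup>2"
    by (rule lipschitz_grad_descent[OF f_differentiable grad_lipschitz])
  moreover have "penalty u \<le> penalty y + S \<bullet> (u - y) + K * (norm (u - y))\<^sup>2"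
    unfolding S_def by (rule penalty_le_linearization[OF Y])
  ultimately show ?thesis
    by (simp add: Freal_def inner_add_left algebra_simps)
qed

lemma accept_iff:
  assumes "\<forall>j\<le>l. y j \<in> \<Omega>" and "u \<in> \<Omega>"
  shows "accept v n N idx r rs f lam c M y l u \<longleftrightarrow>
         Freal u \<le> window_max (\<lambda>j. Freal (y j)) M l - c / 2 * (norm (u - y l))\<^sup>2"
proof -
  have "(\<lambda>j. Flam v n N idx r rs f lam (y j)) ` {l - M..l} = ereal ` (\<lambda>j. Freal (y j)) ` {l - M..l}"
    using assms(1) by (auto simp: Flam_eq_Freal image_image)
  moreover have "Max (ereal ` S) = ereal (Max S)" if "finite S" "S \<noteq> {}" for S :: "real set"
    using mono_Max_commute[of ereal S] that by (simp add: mono_def)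
  ultimately show ?thesis
    using assms(2) by (simp add: accept_def window_max_def Flam_eq_Freal)
qed

lemma candidate_accepted:
  assumes xi: "xi_ok v n N idx r rs lam (y l) xi" and L: "2 * (Lf + K) + c \<le> L" "0 < L"
    and cand: "candidate v n N idx r rs f lam (y l) xi L u" and y: "\<forall>j\<le>l. y j \<in> \<Omega>"
  shows "accept v n N idx r rs f lam c M y l u"
proof -
  have "Freal u \<le> Freal (y l) + (Lf + K - L / 2) * (norm (u - y l))\<^sup>2"
    by (rule candidate_sufficient_decrease[OF xi L(2) cand])
  also have "\<dots> \<le> window_max (\<lambda>j. Freal (y j)) M l - c / 2 * (norm (u - y l))\<^sup>2"
    using window_max_ge[of l M l "\<lambda>j. Freal (y j)"] L(1)
      mult_right_mono[of "Lf + K - L / 2" "- c / 2" "(norm (u - y l))\<^sup>2"]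
    by simp
  finally show ?thesis
    using accept_iff[OF y candidate_mem_Omega[OF cand]] by simp
qed

lemma vnpg_prefix_mem_Omega:
  assumes "vnpg_prefix v n N idx r rs f lam Lmin Lmax tau c M l y" and "j \<le> l"
  shows "y j \<in> \<Omega>"
proof (cases j)
  case 0
  with assms show ?thesis by (simp add: vnpg_prefix_def)
next
  case (Suc j')
  with assms have "j' < l" by simp
  with assms(1) obtain Lb where "vnpg_step v n N idx r rs f lam Lmin Lmax tau c M y j' Lb"
    unfolding vnpg_prefix_def by blast
  then obtain xi L0 it u where cand: "candidate v n N idx r rs f lam (y j') xi (L0 * tau ^ it) (u it)"
    and "y (Suc j') = u it"
    unfolding vnpg_step_def by blast
  with Suc candidate_mem_Omega[OF cand] show ?thesis by simp
qed

lemma vnpg_run_prefix: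
  "vnpg_run v n N idx r rs f lam Lmin Lmax tau c M y Lbar \<Longrightarrow>
   vnpg_prefix v n N idx r rs f lam Lmin Lmax tau c M l y"
  by (auto simp: vnpg_run_def vnpg_prefix_def)

lemma vnpg_run_mem_Omega:
  "vnpg_run v n N idx r rs f lam Lmin Lmax tau c M y Lbar \<Longrightarrow> y l \<in> \<Omega>"
  using vnpg_prefix_mem_Omega vnpg_run_prefix by blast

lemma line_search_terminates:
  assumes "0 < Lmin" "1 < tau"
    and prefix: "vnpg_prefix v n N idx r rs f lam Lmin Lmax tau c M l y"
    and xi: "xi_ok v n N idx r rs lam (y l) xi" and "Lmin \<le> L0"
    and cand: "\<forall>i. candidate v n N idx r rs f lam (y l) xi (L0 * tau ^ i) (u i)"
  shows "\<exists>i. accept v n N idx r rs f lam c M y l (u i)"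
proof -
  have "0 < L0" using assms by linarith
  obtain i where "(2 * (Lf + K) + c) / L0 < tau ^ i" using real_arch_pow[OF \<open>1 < tau\<close>] by blast
  with \<open>0 < L0\<close> have "2 * (Lf + K) + c \<le> L0 * tau ^ i" by (simp add: field_simps)
  moreover have "0 < L0 * tau ^ i" using \<open>0 < L0\<close> \<open>1 < tau\<close> by simp
  ultimately have "accept v n N idx r rs f lam c M y l (u i)"
    using candidate_accepted[of y l xi c "L0 * tau ^ i" "u i" M] xi cand
      vnpg_prefix_mem_Omega[OF prefix] by blast
  then show ?thesis ..
qed

lemma vnpg_run_Lbar_bounds:
  assumes run: "vnpg_run v n N idx r rs f lam Lmin Lmax tau c M y Lbar"
    and "0 < Lmin" "1 < tau"
  shows "0 < Lbar l \<and> Lbar l \<le> max Lmax (tau * (2 * (Lf + K) + c))"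
proof -
  obtain xi L0 it u where
    xi: "xi_ok v n N idx r rs lam (y l) xi" and L0: "Lmin \<le> L0" "L0 \<le> Lmax"
    and cand: "\<forall>i\<le>it. candidate v n N idx r rs f lam (y l) xi (L0 * tau ^ i) (u i)"
    and rejected: "\<forall>i<it. \<not> accept v n N idx r rs f lam c M y l (u i)"
    and Lbar: "Lbar l = L0 * tau ^ it"
    using run unfolding vnpg_run_def vnpg_step_def by blast
  have "0 < L0" using L0 \<open>0 < Lmin\<close> by linarith
  then have pos: "0 < L0 * tau ^ i" for i using \<open>1 < tau\<close> by simp
  show ?thesis
  proof (cases it)
    case 0
    with Lbar L0 pos[of 0] show ?thesis by simp
  next
    case (Suc j)
    have "L0 * tau ^ j < 2 * (Lf + K) + c"
    proof (rule ccontr)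
      assume "\<not> ?thesis"
      moreover have "candidate v n N idx r rs f lam (y l) xi (L0 * tau ^ j) (u j)"
        using cand Suc by simp
      ultimately have "accept v n N idx r rs f lam c M y l (u j)"
        using candidate_accepted[of y l xi c "L0 * tau ^ j" "u j" M] xi pos[of j] vnpg_run_mem_Omega[OF run]
        by simp
      with rejected Suc show False by auto
    qed
    then have "tau * (L0 * tau ^ j) \<le> tau * (2 * (Lf + K) + c)" using \<open>1 < tau\<close> by simp
    with Lbar Suc pos[of it] show ?thesis by (simp add: mult_ac le_max_iff_disj)
  qed
qed

lemma vnpg_run_bounded_Lbar:
  assumes "vnpg_run v n N idx r rs f lam Lmin Lmax tau c M y Lbar" and "0 < Lmin" "1 < tau"
  shows "bounded (range Lbar)"
proof -
  have "norm (Lbar l) \<le> max Lmax (tau * (2 * (Lf + K) + c))" for l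
    using vnpg_run_Lbar_bounds[OF assms, of l] by simp
  then show ?thesis unfolding bounded_iff by blast
qed

lemma vnpg_run_window_descent:
  assumes run: "vnpg_run v n N idx r rs f lam Lmin Lmax tau c M y Lbar"
  shows "Freal (y (Suc l)) \<le> window_max (\<lambda>j. Freal (y j)) M l - c / 2 * (norm (y (Suc l) - y l))\<^sup>2"
proof -
  obtain it u where "accept v n N idx r rs f lam c M y l (u it)" and "y (Suc l) = u it"
    using run unfolding vnpg_run_def vnpg_step_def by blast
  moreover have "\<forall>j\<le>l. y j \<in> \<Omega>" and "y (Suc l) \<in> \<Omega>" using vnpg_run_mem_Omega[OF run] by auto
  ultimately show ?thesis using accept_iff by simp
qed

(* The optimality condition of the pseudo-projection, multiplied by \bar L_l, reads
   \bar L_l (y^l - y^{l+1}) - (grad h(y^l) - xi^l) \<in> N_Omega(y^{l+1}). *)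
lemma vnpg_run_stationarity_residual:
  assumes run: "vnpg_run v n N idx r rs f lam Lmin Lmax tau c M y Lbar"
    and "0 < Lmin" "1 < tau"
  shows "infdist 0 (stat_set v n N idx r rs f lam (y l) (y (Suc l))) \<le> Lbar l * norm (y (Suc l) - y l)"
proof -
  obtain xi L0 it u where xi: "xi_ok v n N idx r rs lam (y l) xi"
    and "candidate v n N idx r rs f lam (y l) xi (L0 * tau ^ it) (u it)"
    and "Lbar l = L0 * tau ^ it" and "y (Suc l) = u it"
    using run unfolding vnpg_run_def vnpg_step_def by blast
  then have cand: "candidate v n N idx r rs f lam (y l) xi (Lbar l) (y (Suc l))" by simp
  obtain Y where Y: "\<forall>i<k. Y i \<in> mproj (C i) (A i (y l))"
    and xi_eq: "xi = (\<Sum>i<k. (1 / lam) *\<^sub>R madj (A i) (Y i))"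
    using xi unfolding xi_ok_def by blast
  define g where "g = grad (hfun v n N idx r rs f lam) (y l) - xi"
  define w where "w = Lbar l *\<^sub>R ((y l - (1 / Lbar l) *\<^sub>R g) - y (Suc l))"
  have Lbar: "0 < Lbar l" using vnpg_run_Lbar_bounds[OF assms] by blast
  have "w \<in> normal_cone \<Omega> (y (Suc l))"
    using cand unfolding w_def g_def candidate_def pproj_def by (auto intro: normal_cone_scaleR[OF _ Lbar])
  with Y have "grad f (y l) + w + (\<Sum>i<k. (1 / lam) *\<^sub>R madj (A i) (A i (y l) - Y i))
      \<in> stat_set v n N idx r rs f lam (y l) (y (Suc l))"
    unfolding stat_set_def by blast
  moreover have "grad f (y l) + w + (\<Sum>i<k. (1 / lam) *\<^sub>R madj (A i) (A i (y l) - Y i))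
      = Lbar l *\<^sub>R (y l - y (Suc l))"
    using Lbar grad_hfun_minus_xi[OF Y] unfolding w_def g_def xi_eq by (simp add: algebra_simps)
  ultimately have "infdist 0 (stat_set v n N idx r rs f lam (y l) (y (Suc l)))
      \<le> norm (Lbar l *\<^sub>R (y l - y (Suc l)))"
    by (metis infdist_le dist_0_norm)
  with Lbar show ?thesis by (simp add: norm_minus_commute)
qed

lemma vnpg_run_approx_stationary:
  assumes run: "vnpg_run v n N idx r rs f lam Lmin Lmax tau c M y Lbar"
    and "0 < Lmin" "1 < tau" "0 < c" "0 < \<epsilon>"
  shows "\<exists>l. norm (y (Suc l) - y l) \<le> \<epsilon> \<and>
           Flam v n N idx r rs f lam (y l) \<le> Flam v n N idx r rs f lam (y 0) \<and>
           infdist 0 (stat_set v n N idx r rs f lam (y l) (y (Suc l))) \<le> \<epsilon>"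
proof -
  define B where "B = max Lmax (tau * (2 * (Lf + K) + c))"
  have Lbar: "0 < Lbar l \<and> Lbar l \<le> B" for l
    unfolding B_def by (rule vnpg_run_Lbar_bounds[OF run \<open>0 < Lmin\<close> \<open>1 < tau\<close>])
  then have "0 < B" by (meson less_le_trans)
  define \<eta> where "\<eta> = \<epsilon> / (B + 1)"
  have \<eta>: "0 < \<eta>" "\<eta> \<le> \<epsilon>" "B * \<eta> \<le> \<epsilon>"
    using \<open>0 < B\<close> \<open>0 < \<epsilon>\<close> by (auto simp: \<eta>_def field_simps)
  define d where "d l = c / 2 * (norm (y (Suc l) - y l))\<^sup>2" for l
  have descent: "Freal (y (Suc l)) \<le> window_max (\<lambda>j. Freal (y j)) M l - d l" for l
    unfolding d_def by (rule vnpg_run_window_descent[OF run])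
  have "0 < c / 2 * \<eta>\<^sup>2" using \<eta> \<open>0 < c\<close> by simp
  then obtain l where "d l \<le> c / 2 * \<eta>\<^sup>2"
    using nonmonotone_small_decrease[OF descent Freal_nonneg] by blast
  then have step: "norm (y (Suc l) - y l) \<le> \<eta>"
    using \<open>0 < c\<close> \<eta> by (simp add: d_def power2_le_iff_abs_le)
  have "infdist 0 (stat_set v n N idx r rs f lam (y l) (y (Suc l))) \<le> Lbar l * norm (y (Suc l) - y l)"
    by (rule vnpg_run_stationarity_residual[OF run \<open>0 < Lmin\<close> \<open>1 < tau\<close>])
  also have "\<dots> \<le> B * \<eta>" using Lbar[of l] step by (intro mult_mono) auto
  finally have "infdist 0 (stat_set v n N idx r rs f lam (y l) (y (Suc l))) \<le> \<epsilon>" using \<eta> by simp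
  moreover have "Freal (y l) \<le> Freal (y 0)"
    using nonmonotone_le_initial[OF descent] \<open>0 < c\<close> by (simp add: d_def)
  then have "Flam v n N idx r rs f lam (y l) \<le> Flam v n N idx r rs f lam (y 0)"
    using vnpg_run_mem_Omega[OF run] by (simp add: Flam_eq_Freal)
  ultimately show ?thesis using step \<eta> by (intro exI[of _ l]) auto
qed

end

section \<open>Hankel maps\<close>

lemma Lsmall_eq_coord_mat:
  "rs i < n \<Longrightarrow> Lsmall n idx rs i = coord_mat (rs i + 1) (n - rs i) (\<lambda>(a,b). idx (i * n + (a + b)))"
  by (rule ext) (auto simp: Lsmall_def hankel_def blk_def coord_mat_def Suc_diff_Suc intro!: eq_matI)

lemma Lbig_eq_coord_mat:
  "Lbig n N idx r = coord_mat (r + 1) (N * (n - r)) (\<lambda>(a,b). idx (b div (n - r) * n + (a + b mod (n - r))))"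
  by (rule ext) (auto simp: Lbig_def blk_def coord_mat_def intro!: eq_matI)

lemma rank_le_subset_carrier: "rank_le p q \<rho> \<subseteq> carrier_mat p q"
  by (auto simp: rank_le_def)

lemma AA_CC_coord_mat:
  assumes "\<forall>i<N. rs i < n"
  shows "\<exists>P Q \<Phi>. \<forall>i<kk v N. AA v n N idx r rs i = coord_mat (P i) (Q i) (\<Phi> i) \<and>
                              CC v n N r rs i \<subseteq> carrier_mat (P i) (Q i)"
proof -
  define \<Phi>small where "\<Phi>small i = (\<lambda>(a::nat, b::nat). idx (i * n + (a + b)))" for i
  define \<Phi>big where "\<Phi>big = (\<lambda>(a, b). idx (b div (n - r) * n + (a + b mod (n - r))))"
  have small: "Lsmall n idx rs i = coord_mat (rs i + 1) (n - rs i) (\<Phi>small i)" if "i < N" for i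
    using Lsmall_eq_coord_mat assms that unfolding \<Phi>small_def by blast
  show ?thesis
  proof (cases v)
    case VarI
    then show ?thesis
      by (intro exI[of _ "\<lambda>_. r + 1"] exI[of _ "\<lambda>_. N * (n - r)"] exI[of _ "\<lambda>_. \<Phi>big"])
         (simp add: kk_def AA_def CC_def Lbig_eq_coord_mat \<Phi>big_def rank_le_subset_carrier)
  next
    case VarII
    then show ?thesis
      by (intro exI[of _ "\<lambda>i. rs i + 1"] exI[of _ "\<lambda>i. n - rs i"] exI[of _ \<Phi>small])
         (simp add: kk_def AA_def CC_def small rank_le_subset_carrier)
  next
    case VarIII
    then show ?thesis
      by (intro exI[of _ "\<lambda>i. if i < N then rs i + 1 else r + 1"]
          exI[of _ "\<lambda>i. if i < N then n - rs i else N * (n - r)"]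
          exI[of _ "\<lambda>i. if i < N then \<Phi>small i else \<Phi>big"])
         (simp add: kk_def AA_def CC_def small Lbig_eq_coord_mat \<Phi>big_def rank_le_subset_carrier)
  qed
qed

theorem theorem3p1:
  fixes n N r :: nat and rs :: "nat \<Rightarrow> nat" and idx :: "nat \<Rightarrow> 'd::finite"
    and v :: variant and f :: "real^'d \<Rightarrow> real"
    and lam Lmin Lmax tau c :: real and M :: nat
  assumes "n \<ge> 1" and "N \<ge> 1"
    and "bij_betw idx {..<N * n} (UNIV :: 'd set)"
    and "0 < r" and "r \<le> (n - 1) div 2"
    and "\<forall>i<N. 0 < rs i \<and> rs i \<le> r"
    and "\<forall>y. 0 \<le> f y"
    and "\<forall>\<alpha>. bounded {y. f y \<le> \<alpha>}"
    and "\<forall>y. f differentiable (at y)"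
    and "continuous_on UNIV (grad f)"
    and "\<exists>L. L-lipschitz_on UNIV (grad f)"
    and "lam > 0"
    and "0 < Lmin" and "Lmin < Lmax" and "tau > 1" and "c > 0"
  shows
    "(\<forall>l y xi L0 u.
        vnpg_prefix v n N idx r rs f lam Lmin Lmax tau c M l y \<and>
        xi_ok v n N idx r rs lam (y l) xi \<and> Lmin \<le> L0 \<and> L0 \<le> Lmax \<and>
        (\<forall>i. candidate v n N idx r rs f lam (y l) xi (L0 * tau ^ i) (u i))
        \<longrightarrow> (\<exists>i. accept v n N idx r rs f lam c M y l (u i)))
     \<and>
     (\<forall>y Lbar. vnpg_run v n N idx r rs f lam Lmin Lmax tau c M y Lbar \<longrightarrow>
        bounded (range Lbar) \<and>
        (\<forall>\<epsilon>>0. \<exists>l.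
           norm (y (Suc l) - y l) \<le> \<epsilon> \<and>
           Flam v n N idx r rs f lam (y l) \<le> Flam v n N idx r rs f lam (y 0) \<and>
           infdist 0 (stat_set v n N idx r rs f lam (y l) (y (Suc l))) \<le> \<epsilon>))"
proof -
  have "\<forall>i<N. rs i < n" using assms(1,5,6) by fastforce
  then obtain P Q \<Phi> where coord: "\<forall>i<kk v N. AA v n N idx r rs i = coord_mat (P i) (Q i) (\<Phi> i) \<and>
      CC v n N r rs i \<subseteq> carrier_mat (P i) (Q i)"
    using AA_CC_coord_mat by blast
  obtain Lf where "Lf-lipschitz_on UNIV (grad f)" using assms(11) by blast
  then interpret vnpg_setting v n N r rs idx P Q \<Phi> f lam Lf
    using coord assms(7,9,12) by unfold_locales auto
  show ?thesis
    using line_search_terminates[OF assms(13,15)] vnpg_run_bounded_Lbar[OF _ assms(13,15)]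
      vnpg_run_approx_stationary[OF _ assms(13,15,16)]
    by blast
qed

end
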